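(* Let $A$ be a ring having the property $(TF)_{right}$. Then for any monoid $M$ the monoid ring $A[M]$ also has the property $(TF)_{right}$.
   Context: A ring $A$ has the property $(TF)_{right}$ (right triple factorization property) if for every finite collection $a_1,\dots,a_m\in A$ there exist $b_1,\dots,b_m,c,d\in A$ such that $a_i=b_icd$ for $1\le i\le m$ and the left annihilators in $A$ of $c$ and of $cd$ coincide. $A[M]$ denotes the monoid ring of finite formal sums $\sum a_j m_j$ with $a_j\in A$, $m_j\in M$. *)

theory Defs
  imports "HOL-Library.Poly_Mapping"
begin

definition TF_right :: "'a::ring itself \<Rightarrow> bool" where
  "TF_right _ \<longleftrightarrow>
     (\<forall>as :: 'a list. \<exists>bs :: 'a list. \<exists>c d :: 'a.
        length bs = length as \<and>
        (\<forall>i < length as. as ! i = bs ! i * c * d) \<and>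
        {x :: 'a. x * c = 0} = {x. x * (c * d) = 0})"

end

theory Submission
  imports Defs
begin

text \<open>Given triple factorizations of the finitely many coefficients of the elements
  \<open>f\<^sub>1, \<dots>, f\<^sub>m\<close> of \<open>A[M]\<close> as \<open>s = b(s) c d\<close>, factor each \<open>f\<^sub>i\<close> coefficientwise:
  \<open>f\<^sub>i = (b \<circ> f\<^sub>i) \<cdot> c \<cdot> d\<close> with \<open>c\<close> and \<open>d\<close> placed at the neutral element of \<open>M\<close>.
  Right multiplication by such constants acts on each coefficient separately, so a
  polynomial annihilates \<open>c\<close> (resp. \<open>c d\<close>) from the left iff all of its coefficients do,
  and the annihilator condition transfers from \<open>A\<close> to \<open>A[M]\<close>.\<close>

definition left_annihilator :: "'a::semiring_0 \<Rightarrow> 'a set" where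
  "left_annihilator c = {x. x * c = 0}"

lemma TF_right_iff_finite_set:
  "TF_right TYPE('a::ring) \<longleftrightarrow>
     (\<forall>S :: 'a set. finite S \<longrightarrow> (\<exists>b c d. (\<forall>s\<in>S. s = b s * c * d) \<and>
        left_annihilator c = left_annihilator (c * d)))"
proof
  assume TF: "TF_right TYPE('a)"
  show "\<forall>S :: 'a set. finite S \<longrightarrow> (\<exists>b c d. (\<forall>s\<in>S. s = b s * c * d) \<and>
          left_annihilator c = left_annihilator (c * d))"
  proof (intro allI impI)
    fix S :: "'a set"
    assume "finite S"
    then obtain as where as: "set as = S"
      using finite_list by blast
    from TF obtain bs c d where
      fact: "\<forall>i < length as. as ! i = bs ! i * c * d" and
      ann: "{x :: 'a. x * c = 0} = {x. x * (c * d) = 0}"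
      unfolding TF_right_def by blast
    define index where "index s = (SOME i. i < length as \<and> as ! i = s)" for s
    have "s = bs ! index s * c * d" if "s \<in> S" for s
    proof -
      have "\<exists>i. i < length as \<and> as ! i = s"
        using that as by (auto simp: in_set_conv_nth)
      then have "index s < length as \<and> as ! index s = s"
        unfolding index_def by (rule someI_ex)
      then show ?thesis
        using fact by metis
    qed
    then show "\<exists>b c d. (\<forall>s\<in>S. s = b s * c * d) \<and> left_annihilator c = left_annihilator (c * d)"
      using ann unfolding left_annihilator_def
      by (intro exI[of _ "\<lambda>s. bs ! index s"] exI[of _ c] exI[of _ d]) blast
  qed
next
  assume fin: "\<forall>S :: 'a set. finite S \<longrightarrow> (\<exists>b c d. (\<forall>s\<in>S. s = b s * c * d) \<and>
                 left_annihilator c = left_annihilator (c * d))"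
  show "TF_right TYPE('a)"
    unfolding TF_right_def
  proof
    fix as :: "'a list"
    from fin obtain b c d where
      "\<forall>s\<in>set as. s = b s * c * d" "left_annihilator c = left_annihilator (c * d)"
      by blast
    then show "\<exists>bs c d. length bs = length as \<and> (\<forall>i < length as. as ! i = bs ! i * c * d) \<and>
                 {x. x * c = 0} = {x. x * (c * d) = 0}"
      unfolding left_annihilator_def
      by (intro exI[of _ "map b as"] exI[of _ c] exI[of _ d]) auto
  qed
qed

lemma lookup_map:
  "g 0 = 0 \<Longrightarrow> Poly_Mapping.lookup (Poly_Mapping.map g p) k = g (Poly_Mapping.lookup p k)"
  by transfer (auto simp: when_def)

lemma mult_single_zero_right_conv_map:
  fixes p :: "'m::monoid_add \<Rightarrow>\<^sub>0 'a::semiring_0"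
  shows "p * Poly_Mapping.single 0 s = Poly_Mapping.map (\<lambda>a. a * s) p"
proof (transfer fixing: s)
  fix p :: "'m \<Rightarrow> 'a"
  have "prod_fun p (\<lambda>k. s when 0 = k) x = p x * s" for x
  proof -
    have "(\<Sum>q. (s when 0 = q) when x = l + q) = (s when x = l)" for l
    proof -
      have "\<And>q. ((s when 0 = q) when x = l + q) = ((s when x = l) when q = 0)"
        by (auto simp: when_def)
      then show ?thesis
        by simp
    qed
    then have "prod_fun p (\<lambda>k. s when 0 = k) x = (\<Sum>l. p l * (s when x = l))"
      unfolding prod_fun_def by simp
    also have "\<dots> = (\<Sum>l. p l * s when x = l)"
      by (rule Sum_any.cong) (simp add: when_def)
    also have "\<dots> = p x * s"
      by (simp add: when_def)
    finally show ?thesis .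
  qed
  then show "prod_fun p (\<lambda>k. s when 0 = k) = (\<lambda>k. p k * s when p k \<noteq> 0)"
    by (auto simp: fun_eq_iff when_def)
qed

lemma lookup_mult_single_zero_right:
  fixes p :: "'m::monoid_add \<Rightarrow>\<^sub>0 'a::semiring_0"
  shows "Poly_Mapping.lookup (p * Poly_Mapping.single 0 s) k = Poly_Mapping.lookup p k * s"
  by (simp add: mult_single_zero_right_conv_map lookup_map)

lemma left_annihilator_single_zero_iff:
  fixes x :: "'m::monoid_add \<Rightarrow>\<^sub>0 'a::semiring_0"
  shows "x \<in> left_annihilator (Poly_Mapping.single 0 c) \<longleftrightarrow>
           (\<forall>k. Poly_Mapping.lookup x k \<in> left_annihilator c)"
  by (auto simp: left_annihilator_def lookup_mult_single_zero_right poly_mapping_eq_iff fun_eq_iff)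

lemma left_annihilator_single_zero_eq:
  assumes "left_annihilator c = left_annihilator (c * d)"
  shows "left_annihilator (Poly_Mapping.single 0 c :: 'm::monoid_add \<Rightarrow>\<^sub>0 'a::semiring_0) =
           left_annihilator (Poly_Mapping.single 0 c * Poly_Mapping.single 0 d)"
  using assms by (auto simp: mult_single left_annihilator_single_zero_iff)

lemma coefficientwise_factorization:
  fixes f :: "'m::monoid_add \<Rightarrow>\<^sub>0 'a::semiring_0"
  assumes "\<forall>k \<in> Poly_Mapping.keys f. Poly_Mapping.lookup f k = b (Poly_Mapping.lookup f k) * c * d"
  shows "f = Poly_Mapping.map (\<lambda>a. if a = 0 then 0 else b a) f
               * Poly_Mapping.single 0 c * Poly_Mapping.single 0 d"
  using assms
  by (intro poly_mapping_eqI) (auto simp: lookup_mult_single_zero_right lookup_map in_keys_iff)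

theorem proposition3p5:
  assumes "TF_right TYPE('a::ring)"
  shows "TF_right TYPE('m::monoid_add \<Rightarrow>\<^sub>0 'a)"
  unfolding TF_right_iff_finite_set
proof (intro allI impI)
  fix S :: "('m \<Rightarrow>\<^sub>0 'a) set"
  assume "finite S"
  then have "finite (\<Union>f\<in>S. Poly_Mapping.lookup f ` Poly_Mapping.keys f)"
    by auto
  with assms obtain b c d where
    fact: "\<forall>s \<in> (\<Union>f\<in>S. Poly_Mapping.lookup f ` Poly_Mapping.keys f). s = b s * c * d" and
    ann: "left_annihilator c = left_annihilator (c * d)"
    unfolding TF_right_iff_finite_set by meson
  define B where "B f = Poly_Mapping.map (\<lambda>a. if a = 0 then 0 else b a) f" for f :: "'m \<Rightarrow>\<^sub>0 'a"
  have "f = B f * Poly_Mapping.single 0 c * Poly_Mapping.single 0 d" if "f \<in> S" for f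
    unfolding B_def using that fact by (intro coefficientwise_factorization) blast
  with left_annihilator_single_zero_eq[OF ann]
  show "\<exists>B C D. (\<forall>f\<in>S. f = B f * C * D) \<and> left_annihilator C = left_annihilator (C * D)"
    by blast
qed

end
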